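(* Let $s$ be a positive integer. For each $\mathbf{i}\in\mathbb{Z}_{\ge 0}^h$ with $|\mathbf{i}|\le s$ there is a unique $\Omega_{s,\mathbf{i}}\in\mathcal{R}$ with $\deg_{\mathcal{H}}\Omega_{s,\mathbf{i}}\le \deg_{\mathcal{H}}\Lambda_s+|\mathbf{i}|(2g-1)$ such that $$\Lambda_s(\mathbf{f}-\mathbf{R})^{\mathbf{i}}=G^{|\mathbf{i}|}\,\Omega_{s,\mathbf{i}}.$$
   Context: Let $q$ be a prime power. The Hermitian curve over $\mathbb{F}_{q^2}$ is the smooth projective plane curve with affine equation $Y^q+Y=X^{q+1}$; it has genus $g=\tfrac12 q(q-1)$, $n=q^3$ affine rational points $P_1,\dots,P_n$ and the point at infinity $P_\infty$. Let $\mathcal{R}=\bigcup_{m\ge0}\mathcal{L}(mP_\infty)=\mathbb{F}_{q^2}[X,Y]/(Y^q+Y-X^{q+1})$ with basis $\{X^iY^j: i\ge0,0\le j<q\}$; $\deg_{\mathcal{H}} f=-v_{P_\infty}(f)$ ($v_P$ the valuation at $P$), so $\deg_{\mathcal{H}}(X^iY^j)=iq+j(q+1)$; $f\neq 0$ is monic if the coefficient of its basis monomial of largest $\deg_{\mathcal{H}}$ is $1$. Fix integers $h\ge1$ and $m_{\mathrm H}$ with $2(g-1)<m_{\mathrm H}<n$. Let $\mathbf{f}=(f_1,\dots,f_h)\in\mathcal{L}(m_{\mathrm H}P_\infty)^h$ and let $\mathbf{r}=\mathbf{c}+\mathbf{e}\in\mathbb{F}_{q^2}^{h\times n}$, where $\mathbf{c}$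 has $i$-th row $(f_i(P_1),\dots,f_i(P_n))$, and let $\mathcal{E}\subseteq\{1,\dots,n\}$ be the set of indices of nonzero columns of $\mathbf{e}$. Let $\Lambda_s$ be the unique monic element of minimal $\deg_{\mathcal{H}}$ of $\{\Lambda\in\mathcal{R}: v_{P_i}(\Lambda)\ge s\ \forall i\in\mathcal{E}\}$. Let $\mathbf{R}=(R_1,\dots,R_h)\in\mathcal{R}^h$ with $\deg_{\mathcal{H}}R_i<n+2g$ and $R_i(P_j)=r_{i,j}$ for all $i,j$. Let $G=\prod_{\alpha\in\mathbb{F}_{q^2}}(X-\alpha)=X^{q^2}-X$. For $\mathbf{i}\in\mathbb{Z}_{\ge0}^h$: $|\mathbf{i}|=\sum_\mu i_\mu$, and for $\mathbf{a}\in\mathcal{R}^h$, $\mathbf{a}^{\mathbf{i}}=\prod_\mu a_\mu^{i_\mu}$. *)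

theory Defs
  imports "HOL-Computational_Algebra.Computational_Algebra"
begin

(* Bivariate polynomials F[X,Y] are modelled as F[X][Y] = 'a poly poly:
   the outer variable is Y, the inner (coefficient) variable is X.
   The coordinate ring R = F[X,Y]/(Y^q+Y-X^(q+1)) is represented by the
   reduced representatives (degree in Y < q), i.e. the span of the basis
   X^i Y^j, j < q; equality in R is congruence modulo the Hermitian polynomial. *)

definition Xp :: "'a::comm_ring_1 poly poly" where "Xp = [:[:0, 1:]:]"
definition Yp :: "'a::comm_ring_1 poly poly" where "Yp = [:0, 1:]"

definition hermH :: "nat \<Rightarrow> 'a::comm_ring_1 poly poly" where
  "hermH q = Yp ^ q + Yp - Xp ^ (q + 1)"

definition hcong :: "nat \<Rightarrow> 'a::comm_ring_1 poly poly \<Rightarrow> 'a poly poly \<Rightarrow> bool" where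
  "hcong q f g \<longleftrightarrow> hermH q dvd (f - g)"

definition hreduced :: "nat \<Rightarrow> 'a::comm_ring_1 poly poly \<Rightarrow> bool" where
  "hreduced q f \<longleftrightarrow> degree f < q"

definition hsupp :: "'a::comm_ring_1 poly poly \<Rightarrow> (nat \<times> nat) set" where
  "hsupp f = {(i, j). coeff (coeff f j) i \<noteq> 0}"

definition hweight :: "nat \<Rightarrow> nat \<times> nat \<Rightarrow> nat" where
  "hweight q ij = fst ij * q + snd ij * (q + 1)"

definition hdeg :: "nat \<Rightarrow> 'a::comm_ring_1 poly poly \<Rightarrow> nat" where
  "hdeg q f = Max (hweight q ` hsupp f)"

definition hlc :: "nat \<Rightarrow> 'a::comm_ring_1 poly poly \<Rightarrow> 'a" where
  "hlc q f = (let ij = (THE ij. ij \<in> hsupp f \<and> hweight q ij = hdeg q f)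
              in coeff (coeff f (snd ij)) (fst ij))"

definition hmonic :: "nat \<Rightarrow> 'a::comm_ring_1 poly poly \<Rightarrow> bool" where
  "hmonic q f \<longleftrightarrow> f \<noteq> 0 \<and> hlc q f = 1"

definition HermPts :: "nat \<Rightarrow> ('a::field \<times> 'a) set" where
  "HermPts q = {(a, b). b ^ q + b = a ^ (q + 1)}"

definition heval :: "'a::comm_ring_1 poly poly \<Rightarrow> 'a \<times> 'a \<Rightarrow> 'a" where
  "heval f P = poly (map_poly (\<lambda>c. poly c (fst P)) f) (snd P)"

text \<open>v_P(f) \<ge> s for an affine point P=(a,b) of the (smooth) curve: f lies in
  M_P^s, where M_P = (X - a, Y - b) is the maximal ideal of R at P (R is a Dedekind
  domain, so M_P^s = {f. v_P(f) \<ge> s}).\<close>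
definition hval_ge :: "nat \<Rightarrow> 'a::comm_ring_1 \<times> 'a \<Rightarrow> nat \<Rightarrow> 'a poly poly \<Rightarrow> bool" where
  "hval_ge q P s f \<longleftrightarrow>
     (\<exists>c d. f = (\<Sum>k\<le>s. c k * (Xp - [:[:fst P:]:]) ^ k * (Yp - [:[:snd P:]:]) ^ (s - k))
              + d * hermH q)"

text \<open>G = prod over alpha of (X - alpha) = X^(q^2) - X\<close>
definition Gp :: "nat \<Rightarrow> 'a::comm_ring_1 poly poly" where
  "Gp q = Xp ^ (q ^ 2) - Xp"

definition hgenus :: "nat \<Rightarrow> nat" where
  "hgenus q = q * (q - 1) div 2"

end

(*
  Put F = Lam * (f - R)^i and k = |i|.  At an error position Lam vanishes to order s >= k, and at
  every other affine point P each f_mu - R_mu vanishes, so F lies in M_P^k + (H) for all q^3 points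
  P of the curve, M_P = (X - a, Y - b).  A polynomial of Y-degree < q vanishing at all these points
  is divisible by G = X^(q^2) - X, because every fibre X = alpha of the curve has q points.  Since
  dH/dY = 1, X - a is a local parameter at P = (a, b), and G / (X - a) is a unit there, so the
  quotient lies in M_P^(k-1) + (H); induction on k gives F = G^k * Omega modulo H.
  For the degree bound, grade by deg_H(X^i Y^j) = iq + j(q+1): reduction modulo H never raises it,
  as Y^q and X^(q+1) have the same weight, and G^k has weight k q^3.  Uniqueness holds because
  reduced representatives are unique and G is not a zero divisor.
*)
theory Submission
  imports Defs
begin

section \<open>Finite fields and the fibres of the Hermitian curve\<close>

(* The library's finite_field_power_card_eq_same needs the class finite_field, which a type of
   sort {field, finite} does not instantiate. *)
lemma field_power_card_eq_same:
  fixes x :: "'a::{field,finite}"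
  shows "x ^ card (UNIV :: 'a set) = x"
proof (cases "x = 0")
  case False
  have "(\<Prod>y\<in>UNIV - {0}. x * y) = (\<Prod>y\<in>UNIV - {0}. y)"
    by (rule prod.reindex_bij_witness[of _ "\<lambda>y. y / x" "\<lambda>y. x * y"]) (use False in auto)
  then have "x ^ (card (UNIV :: 'a set) - 1) = 1"
    by (simp add: prod.distrib card_Diff_singleton)
  then show ?thesis
    by (metis finite_UNIV_card_ge_0 finite power_eq_if mult_1_right not_gr0)
qed (simp add: finite_UNIV_card_ge_0)

lemma card_UNIV_ge_2: "card (UNIV :: 'a::{field,finite} set) \<ge> 2"
proof -
  have "card {0, 1 :: 'a} \<le> card (UNIV :: 'a set)"
    by (rule card_mono) auto
  then show ?thesis
    by simp
qed

lemma card_UNIV_eq_square_imp_ge_2: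
  assumes "card (UNIV :: 'a::{field,finite} set) = q\<^sup>2"
  shows "q \<ge> 2"
proof -
  have "q\<^sup>2 \<ge> 2"
    using card_UNIV_ge_2[where 'a='a] assms by simp
  then show ?thesis
    using less_2_cases[of q] by (cases "q \<ge> 2") auto
qed

lemma of_nat_card_UNIV_eq_0: "of_nat (card (UNIV :: 'a::{ring_1,finite} set)) = (0::'a)"
proof -
  have "(\<Sum>y\<in>UNIV. y + 1) = (\<Sum>y\<in>(UNIV :: 'a set). y)"
    by (rule sum.reindex_bij_witness[of _ "\<lambda>y. y - 1" "\<lambda>y. y + 1"]) auto
  then show ?thesis
    by (simp add: sum.distrib)
qed

lemma CHAR_eq_of_CARD_eq_prime_power:
  assumes "prime p" and "card (UNIV :: 'a::{field,finite} set) = p ^ n"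
  shows "CHAR('a) = p"
proof -
  have "prime CHAR('a)"
    by (simp add: finite_imp_CHAR_pos prime_CHAR_semidom)
  moreover have "CHAR('a) dvd p ^ n"
    using of_nat_card_UNIV_eq_0[where 'a='a] assms(2) of_nat_eq_0_iff_char_dvd by metis
  ultimately show ?thesis
    using assms(1) by (metis prime_dvd_power primes_dvd_imp_eq)
qed

lemma Hermitian_field_char:
  assumes "prime p" and "e > 0" and q: "q = p ^ e"
    and card: "card (UNIV :: 'a::{field,finite} set) = q\<^sup>2"
  shows "of_nat q = (0::'a)" and "(x + y :: 'a) ^ q = x ^ q + y ^ q"
proof -
  have "CHAR('a) = p"
    using CHAR_eq_of_CARD_eq_prime_power[OF \<open>prime p\<close>, of "e * 2"] card q
    by (simp add: power_mult)
  then show "of_nat q = (0::'a)"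
    using \<open>e > 0\<close> q by (simp add: of_nat_eq_0_iff_char_dvd)
  show "(x + y :: 'a) ^ q = x ^ q + y ^ q"
    using freshmans_dream'[where 'a='a and m=q and n=e] \<open>CHAR('a) = p\<close> \<open>prime p\<close> q by simp
qed

lemma card_roots_monic_le:
  fixes p :: "'a::idom poly"
  assumes "degree p < n"
  shows "card {x. x ^ n + poly p x = 0} \<le> n"
proof -
  have deg: "degree (monom 1 n + p) = n"
    using assms by (simp add: degree_add_eq_left degree_monom_eq)
  then have "monom 1 n + p \<noteq> 0"
    using assms by auto
  then have "card {x. poly (monom 1 n + p) x = 0} \<le> n"
    using card_poly_roots_bound deg by metis
  then show ?thesis
    by (simp add: poly_monom)
qed

(* T y = y^q + y maps the field into F_q = {c. c^q = c}; at most q values with fibres of size at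
   most q must cover all q^2 elements, so every fibre over F_q has exactly q elements. *)
lemma card_Hermitian_fiber_ge:
  fixes \<alpha> :: "'a::{field,finite}"
  assumes frob: "\<And>x y :: 'a. (x + y) ^ q = x ^ q + y ^ q"
    and card: "card (UNIV :: 'a set) = q ^ 2"
  shows "q \<le> card {b. b ^ q + b = \<alpha> ^ (q + 1)}"
proof -
  define T where "T y = y ^ q + y" for y :: 'a
  define Fq where "Fq = {c :: 'a. c ^ q = c}"
  have q2: "q \<ge> 2"
    using card by (rule card_UNIV_eq_square_imp_ge_2)
  have pow_q2: "y ^ q ^ 2 = y" for y :: 'a
    using field_power_card_eq_same[of y] card by simp
  have pow_qq: "(y ^ q) ^ q = y" for y :: 'a
    using pow_q2[of y] by (simp add: power_mult power2_eq_square)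
  have T_Fq: "T y \<in> Fq" for y
    using frob[of "y ^ q" y] pow_qq[of y] by (simp add: T_def Fq_def add.commute)
  have "card Fq \<le> q"
    using card_roots_monic_le[of "-[:0, 1:]" q] q2 by (simp add: Fq_def)
  have fiber_le: "card {y. T y = c} \<le> q" for c
    using card_roots_monic_le[of "[:-c, 1:]" q] q2 by (simp add: T_def eq_neg_iff_add_eq_0 algebra_simps)
  have "(\<Sum>c\<in>Fq. card {y. T y = c}) = card (\<Union>c\<in>Fq. {y. T y = c})"
    by (rule card_UN_disjoint[symmetric]) auto
  also have "(\<Union>c\<in>Fq. {y. T y = c}) = UNIV"
    using T_Fq by blast
  finally have sum_fibers: "(\<Sum>c\<in>Fq. card {y. T y = c}) = q * q"
    using card by (simp add: power2_eq_square)
  have "\<alpha> ^ (q + 1) \<in> Fq"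
    using pow_qq[of \<alpha>] by (simp add: Fq_def power_mult_distrib flip: power_mult)
  show ?thesis
  proof (rule ccontr)
    assume "\<not> ?thesis"
    then have "(\<Sum>c\<in>Fq. card {y. T y = c}) < (\<Sum>c\<in>Fq. q)"
      using fiber_le \<open>\<alpha> ^ (q + 1) \<in> Fq\<close>
      by (intro sum_strict_mono_ex1) (auto simp: T_def not_le)
    also have "\<dots> \<le> q * q"
      using \<open>card Fq \<le> q\<close> by simp
    finally show False
      using sum_fibers by simp
  qed
qed

lemma degree_X_power_minus_X:
  assumes "N \<ge> 2"
  shows "degree ([:0, 1:] ^ N - [:0, 1 :: 'a::idom:]) = N"
proof -
  have "degree ([:0, 1 :: 'a:] ^ N) = N"
    using degree_linear_power[of "0 :: 'a" N] by simp
  moreover have "degree (- [:0, 1 :: 'a:]) = 1"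
    by simp
  ultimately have "degree (- [:0, 1 :: 'a:]) < degree ([:0, 1 :: 'a:] ^ N)"
    using assms by linarith
  with \<open>degree ([:0, 1 :: 'a:] ^ N) = N\<close> show ?thesis
    by (simp only: diff_conv_add_uminus degree_add_eq_left)
qed

lemma X_power_card_minus_X_dvd:
  fixes c :: "'a::{field,finite} poly"
  assumes roots: "\<And>\<alpha>. poly c \<alpha> = 0"
  shows "([:0, 1:] ^ card (UNIV :: 'a set) - [:0, 1:]) dvd c"
proof -
  define G where "G = [:0, 1:] ^ card (UNIV :: 'a set) - [:0, 1 :: 'a:]"
  have deg: "degree G = card (UNIV :: 'a set)"
    unfolding G_def using card_UNIV_ge_2 by (rule degree_X_power_minus_X)
  then have "G \<noteq> 0"
    using card_UNIV_ge_2[where 'a='a] by auto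
  have "poly G \<alpha> = 0" for \<alpha>
    using field_power_card_eq_same[of \<alpha>] by (simp add: G_def)
  moreover have "poly c \<alpha> = poly (c div G * G) \<alpha> + poly (c mod G) \<alpha>" for \<alpha>
    by (simp only: poly_add[symmetric] div_mult_mod_eq)
  ultimately have "poly (c mod G) \<alpha> = 0" for \<alpha>
    using roots[of \<alpha>] by simp
  then have roots_mod: "{\<alpha>. poly (c mod G) \<alpha> = 0} = UNIV"
    by blast
  have "c mod G = 0"
  proof (rule ccontr)
    assume "c mod G \<noteq> 0"
    then have "card (UNIV :: 'a set) \<le> degree (c mod G)"
      using card_poly_roots_bound[of "c mod G"] roots_mod by simp
    moreover have "degree (c mod G) < degree G"
      using degree_mod_less'[OF \<open>G \<noteq> 0\<close> \<open>c mod G \<noteq> 0\<close>] .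
    ultimately show False
      using deg by simp
  qed
  then show ?thesis
    by (simp add: G_def mod_eq_0_iff_dvd)
qed

(* u(a) is the derivative N a^(N-1) - 1 of X^N - X at its root a. *)
lemma X_power_minus_X_eq_linear_mult:
  fixes a :: "'a::field"
  assumes "of_nat N = (0::'a)" and "a ^ N = a"
  obtains u where "[:0, 1:] ^ N - [:0, 1:] = [:-a, 1:] * u" and "poly u a = -1"
proof
  define p where "p = [:0, 1::'a:] ^ N - [:0, 1:]"
  have "poly p a = 0"
    using assms(2) by (simp add: p_def)
  then have p: "p = [:-a, 1:] * synthetic_div p a"
    using synthetic_div_correct'[of a p] by simp
  then show "[:0, 1:] ^ N - [:0, 1:] = [:-a, 1:] * synthetic_div p a"
    unfolding p_def[symmetric] .
  have "poly (synthetic_div p a) a = poly (pderiv p) a"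
    by (subst (2) p) (simp del: mult_pCons_left add: pderiv_mult pderiv_pCons)
  also have "pderiv p = -1"
    using assms(1) by (simp add: p_def pderiv_diff pderiv_power pderiv_pCons flip: one_pCons)
  finally show "poly (synthetic_div p a) a = -1"
    by simp
qed

section \<open>Reduction modulo the Hermitian polynomial\<close>

lemma hermH_eq: "hermH q = monom 1 q + monom 1 1 - monom ([:0, 1:] ^ (q + 1)) 0"
  by (simp add: hermH_def Xp_def Yp_def monom_altdef poly_const_pow)

lemma degree_hermH:
  assumes "q \<ge> 2"
  shows "degree (hermH q :: 'a::comm_ring_1 poly poly) = q"
proof (rule antisym)
  show "degree (hermH q :: 'a poly poly) \<le> q"
    unfolding hermH_eq using assms
    by (intro degree_diff_le degree_add_le) (auto intro: order.trans[OF degree_monom_le])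
  show "q \<le> degree (hermH q :: 'a poly poly)"
    using assms by (intro le_degree) (auto simp: hermH_eq)
qed

lemma lead_coeff_hermH:
  assumes "q \<ge> 2"
  shows "lead_coeff (hermH q :: 'a::comm_ring_1 poly poly) = 1"
  using assms by (simp add: degree_hermH) (simp add: hermH_eq)

lemma hcong_sym: "hcong q F G \<Longrightarrow> hcong q G F"
  unfolding hcong_def by (subst dvd_minus_iff[symmetric]) simp

lemma hcong_trans: "hcong q F G \<Longrightarrow> hcong q G K \<Longrightarrow> hcong q F K"
  unfolding hcong_def using dvd_add[of "hermH q" "F - G" "G - K"] by simp

lemma hcong_mult_left: "hcong q F G \<Longrightarrow> hcong q (C * F) (C * G)"
  unfolding hcong_def using dvd_mult[of "hermH q" "F - G" C] by (simp add: right_diff_distrib)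

lemma hreduced_hcong_eq:
  fixes F G :: "'a::idom poly poly"
  assumes q2: "q \<ge> 2" and "hreduced q F" "hreduced q G" and "hcong q F G"
  shows "F = G"
proof (rule ccontr)
  assume "F \<noteq> G"
  obtain t where t: "F - G = hermH q * t"
    using assms(4) by (auto simp: hcong_def)
  moreover have "t \<noteq> 0" and "hermH q \<noteq> (0 :: 'a poly poly)"
    using t \<open>F \<noteq> G\<close> lead_coeff_hermH[OF q2] by auto
  ultimately have "degree (F - G) = q + degree t"
    using q2 by (simp add: degree_mult_eq degree_hermH)
  moreover have "degree (F - G) < q"
    using assms(2,3) by (simp add: hreduced_def degree_diff_less)
  ultimately show False
    by simp
qed

lemma Gp_eq: "Gp q = [:[:0, 1:] ^ q\<^sup>2 - [:0, 1:]:]"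
  by (simp add: Gp_def Xp_def poly_const_pow)

lemma hreduced_Gp_power_mult: "hreduced q \<Omega> \<Longrightarrow> hreduced q (Gp q ^ k * \<Omega>)"
  by (auto simp: hreduced_def Gp_eq poly_const_pow intro: le_less_trans[OF degree_smult_le])

section \<open>Weighted degree\<close>

(* deg_H F <= m for F not necessarily reduced, checked on the top X-power of each Y-coefficient. *)
definition hweight_le :: "nat \<Rightarrow> 'a::zero poly poly \<Rightarrow> nat \<Rightarrow> bool" where
  "hweight_le q F m \<longleftrightarrow> (\<forall>j. coeff F j \<noteq> 0 \<longrightarrow> degree (coeff F j) * q + j * (q + 1) \<le> m)"

lemma hweight_le_0 [simp]: "hweight_le q 0 m"
  by (simp add: hweight_le_def)

lemma hweight_le_1: "hweight_le q 1 0"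
  by (simp add: hweight_le_def coeff_1)

lemma hweight_le_monom_iff: "hweight_le q (monom c j) m \<longleftrightarrow> c = 0 \<or> degree c * q + j * (q + 1) \<le> m"
  by (auto simp: hweight_le_def coeff_monom)

lemma hweight_le_add:
  assumes A: "hweight_le q A m" and B: "hweight_le q B m"
  shows "hweight_le q (A + B) m"
  unfolding hweight_le_def
proof (intro allI impI)
  fix j
  assume "coeff (A + B) j \<noteq> 0"
  consider "coeff A j = 0" | "coeff B j = 0" | "coeff A j \<noteq> 0" "coeff B j \<noteq> 0"
    by blast
  then show "degree (coeff (A + B) j) * q + j * (q + 1) \<le> m"
  proof cases
    case 3
    then have "degree (coeff A j) * q + j * (q + 1) \<le> m" "degree (coeff B j) * q + j * (q + 1) \<le> m"
      using A B by (simp_all add: hweight_le_def)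
    moreover have "degree (coeff (A + B) j) \<le> degree (coeff A j) \<or> degree (coeff (A + B) j) \<le> degree (coeff B j)"
      using degree_add_le_max[of "coeff A j" "coeff B j"] by (simp add: le_max_iff_disj)
    then have "degree (coeff (A + B) j) * q \<le> degree (coeff A j) * q
        \<or> degree (coeff (A + B) j) * q \<le> degree (coeff B j) * q"
      using mult_le_mono1 by blast
    ultimately show ?thesis
      by linarith
  qed (use A B \<open>coeff (A + B) j \<noteq> 0\<close> in \<open>auto simp: hweight_le_def\<close>)
qed

lemma hweight_le_uminus [simp]: "hweight_le q (- A) m \<longleftrightarrow> hweight_le q A m"
  by (simp add: hweight_le_def)

lemma hweight_le_diff:
  fixes A B :: "'a::ab_group_add poly poly"
  shows "hweight_le q A m \<Longrightarrow> hweight_le q B m \<Longrightarrow> hweight_le q (A - B) m"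
  using hweight_le_add[of q A m "- B"] by simp

lemma hweight_le_sum: "(\<And>i. i \<in> I \<Longrightarrow> hweight_le q (F i) m) \<Longrightarrow> hweight_le q (\<Sum>i\<in>I. F i) m"
  by (induction I rule: infinite_finite_induct) (simp_all add: hweight_le_add)

lemma hweight_le_monom_mult:
  fixes B :: "'a::comm_semiring_1 poly poly"
  assumes c: "hweight_le q (monom c j) a" and B: "hweight_le q B b"
  shows "hweight_le q (monom c j * B) (a + b)"
  unfolding hweight_le_def
proof (intro allI impI)
  fix n
  assume nz: "coeff (monom c j * B) n \<noteq> 0"
  then have n: "j \<le> n" and "c \<noteq> 0" and "coeff B (n - j) \<noteq> 0"
    by (auto simp: coeff_monom_mult split: if_splits)
  have "degree c * q + j * (q + 1) \<le> a"
    using c \<open>c \<noteq> 0\<close> by (simp add: hweight_le_monom_iff)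
  moreover have "degree (coeff B (n - j)) * q + (n - j) * (q + 1) \<le> b"
    using B \<open>coeff B (n - j) \<noteq> 0\<close> by (simp add: hweight_le_def)
  moreover have "degree (coeff (monom c j * B) n) \<le> degree c + degree (coeff B (n - j))"
    using n by (simp add: coeff_monom_mult degree_mult_le)
  then have "degree (coeff (monom c j * B) n) * q \<le> degree c * q + degree (coeff B (n - j)) * q"
    by (metis add_mult_distrib mult_le_mono1)
  moreover have "j * (q + 1) + (n - j) * (q + 1) = n * (q + 1)"
    using n by (simp flip: add_mult_distrib)
  ultimately show "degree (coeff (monom c j * B) n) * q + n * (q + 1) \<le> a + b"
    by linarith
qed

lemma hweight_le_mult:
  fixes A B :: "'a::comm_semiring_1 poly poly"
  assumes A: "hweight_le q A a" and B: "hweight_le q B b"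
  shows "hweight_le q (A * B) (a + b)"
proof -
  have "hweight_le q (monom (coeff A j) j) a" for j
    using A by (auto simp: hweight_le_def hweight_le_monom_iff)
  then have "hweight_le q (\<Sum>j\<le>degree A. monom (coeff A j) j * B) (a + b)"
    by (intro hweight_le_sum hweight_le_monom_mult B)
  then show ?thesis
    by (simp only: poly_as_sum_of_monoms flip: sum_distrib_right)
qed

lemma hweight_le_power:
  fixes A :: "'a::comm_semiring_1 poly poly"
  assumes "hweight_le q A a"
  shows "hweight_le q (A ^ n) (n * a)"
proof (induction n)
  case (Suc n)
  then show ?case
    using hweight_le_mult[OF assms Suc.IH] by simp
qed (simp add: hweight_le_1)

lemma hweight_le_prod:
  fixes F :: "'b \<Rightarrow> 'a::comm_semiring_1 poly poly"
  shows "(\<And>i. i \<in> I \<Longrightarrow> hweight_le q (F i) (m i)) \<Longrightarrow> hweight_le q (\<Prod>i\<in>I. F i) (\<Sum>i\<in>I. m i)"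
  by (induction I rule: infinite_finite_induct) (simp_all add: hweight_le_1 hweight_le_mult)

lemma finite_hsupp: "finite (hsupp F)"
proof (rule finite_subset)
  show "hsupp F \<subseteq> (\<Union>j\<le>degree F. {..degree (coeff F j)} \<times> {j})"
    by (force simp: hsupp_def intro: le_degree)
qed auto

lemma hweight_le_iff_hsupp: "hweight_le q F m \<longleftrightarrow> (\<forall>ij\<in>hsupp F. hweight q ij \<le> m)"
proof
  assume F: "hweight_le q F m"
  show "\<forall>ij\<in>hsupp F. hweight q ij \<le> m"
  proof (clarify)
    fix i j
    assume "(i, j) \<in> hsupp F"
    then have "coeff F j \<noteq> 0" and "i \<le> degree (coeff F j)"
      by (auto simp: hsupp_def intro: le_degree)
    then show "hweight q (i, j) \<le> m"
      using F unfolding hweight_le_def hweight_def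
      by (metis add_le_mono1 fst_conv snd_conv le_trans mult_le_mono1)
  qed
next
  assume "\<forall>ij\<in>hsupp F. hweight q ij \<le> m"
  moreover have "(degree (coeff F j), j) \<in> hsupp F" if "coeff F j \<noteq> 0" for j
    using that by (simp add: hsupp_def)
  ultimately show "hweight_le q F m"
    by (fastforce simp: hweight_le_def hweight_def)
qed

lemma hdeg_le_iff_hweight_le:
  assumes "F \<noteq> 0"
  shows "hdeg q F \<le> m \<longleftrightarrow> hweight_le q F m"
proof -
  have "(degree (lead_coeff F), degree F) \<in> hsupp F"
    using assms by (simp add: hsupp_def)
  then show ?thesis
    unfolding hdeg_def hweight_le_iff_hsupp using finite_hsupp by (subst Max_le_iff) auto
qed

lemma hweight_le_of_hdeg_le: "F = 0 \<or> hdeg q F \<le> m \<Longrightarrow> hweight_le q F m"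
  by (cases "F = 0") (simp_all add: hdeg_le_iff_hweight_le)

lemma monom_mult_hermH:
  fixes c :: "'a::comm_ring_1 poly"
  assumes "q \<le> d"
  shows "monom c (d - q) * hermH q = monom c d + monom c (d - q + 1) - monom (c * [:0, 1:] ^ (q + 1)) (d - q)"
  using assms by (simp add: hermH_eq right_diff_distrib distrib_left mult_monom)

lemma degree_hermH_reduce_step:
  fixes F :: "'a::comm_ring_1 poly poly"
  assumes q2: "q \<ge> 2" and dF: "degree F \<ge> q"
  shows "degree (F - monom (lead_coeff F) (degree F - q) * hermH q) < degree F"
proof -
  have "coeff (F - monom (lead_coeff F) (degree F - q) * hermH q) j = 0" if "j \<ge> degree F" for j
    using that dF q2 by (auto simp: monom_mult_hermH coeff_monom coeff_eq_0)
  moreover have "degree F > 0"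
    using dF q2 by simp
  ultimately show ?thesis
    by (metis leading_coeff_0_iff degree_0 not_le)
qed

(* The two top-weight terms Y^q and X^(q+1) of H both have weight q (q + 1), so eliminating the
   leading Y-power does not raise the weight. *)
lemma hweight_le_hermH_reduce_step:
  fixes F :: "'a::idom poly poly"
  assumes q2: "q \<ge> 2" and dF: "degree F \<ge> q" and F: "hweight_le q F m"
  shows "hweight_le q (F - monom (lead_coeff F) (degree F - q) * hermH q) m"
proof -
  define d c where "d = degree F" and "c = lead_coeff F"
  have "c \<noteq> 0"
    using dF q2 by (auto simp: c_def)
  then have top: "degree c * q + d * (q + 1) \<le> m"
    using F by (simp add: hweight_le_def c_def d_def)
  have "hweight_le q (F - monom c d) m"
    using F by (simp add: hweight_le_def coeff_monom c_def d_def)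
  moreover have "hweight_le q (monom c (d - q + 1)) m"
  proof -
    have "(d - q + 1) * (q + 1) \<le> d * (q + 1)"
      using dF q2 by (intro mult_le_mono1) (simp add: d_def)
    then show ?thesis
      using top by (simp add: hweight_le_monom_iff)
  qed
  moreover have "hweight_le q (monom (c * [:0, 1:] ^ (q + 1)) (d - q)) m"
  proof -
    have "degree (c * [:0, 1:] ^ (q + 1)) = degree c + (q + 1)"
      using \<open>c \<noteq> 0\<close> by (simp add: degree_mult_eq degree_power_eq)
    moreover have "(q + 1) * q + (d - q) * (q + 1) = d * (q + 1)"
      using dF by (simp add: d_def flip: add_mult_distrib)
    ultimately show ?thesis
      using top by (simp add: hweight_le_monom_iff algebra_simps)
  qed
  moreover have "F - monom (lead_coeff F) (degree F - q) * hermH q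
      = (F - monom c d) - monom c (d - q + 1) + monom (c * [:0, 1:] ^ (q + 1)) (d - q)"
    unfolding c_def d_def monom_mult_hermH[OF dF] by (simp add: algebra_simps)
  ultimately show ?thesis
    by (metis hweight_le_add hweight_le_diff)
qed

lemma hermH_reduce:
  fixes F :: "'a::idom poly poly"
  assumes q2: "q \<ge> 2"
  obtains r where "hreduced q r" and "hcong q F r" and "\<And>m. hweight_le q F m \<Longrightarrow> hweight_le q r m"
proof (induction "degree F" arbitrary: F thesis rule: less_induct)
  case less
  show ?case
  proof (cases "degree F < q")
    case True
    then show ?thesis
      by (intro less.prems[of F]) (simp_all add: hreduced_def hcong_def)
  next
    case False
    define G where "G = F - monom (lead_coeff F) (degree F - q) * hermH q"
    have "degree G < degree F" and weight: "\<And>m. hweight_le q F m \<Longrightarrow> hweight_le q G m"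
      using degree_hermH_reduce_step[OF q2] hweight_le_hermH_reduce_step[OF q2] False
      by (simp_all add: G_def not_less)
    then obtain r where "hreduced q r" "hcong q G r" "\<And>m. hweight_le q G m \<Longrightarrow> hweight_le q r m"
      using less.hyps by blast
    moreover have "hcong q F G"
      by (simp add: hcong_def G_def)
    ultimately show ?thesis
      using weight hcong_trans by (intro less.prems[of r]) auto
  qed
qed

lemma square_ge_2: "q \<ge> 2 \<Longrightarrow> q\<^sup>2 \<ge> (2::nat)"
  using mult_le_mono[of 2 q 1 q] by (simp add: power2_eq_square)

lemma hweight_le_Gp_power_mult_cancel:
  fixes \<Omega> :: "'a::idom poly poly"
  assumes q2: "q \<ge> 2" and weight: "hweight_le q (Gp q ^ k * \<Omega>) (k * q ^ 3 + m)"
  shows "hweight_le q \<Omega> m"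
  unfolding hweight_le_def
proof (intro allI impI)
  fix j
  assume "coeff \<Omega> j \<noteq> 0"
  define G where "G = [:0, 1 :: 'a:] ^ q\<^sup>2 - [:0, 1:]"
  have "degree G = q\<^sup>2"
    unfolding G_def using square_ge_2[OF q2] by (rule degree_X_power_minus_X)
  then have "G \<noteq> 0"
    using square_ge_2[OF q2] by auto
  have coeff: "coeff (Gp q ^ k * \<Omega>) j = G ^ k * coeff \<Omega> j"
    by (simp add: Gp_eq G_def poly_const_pow)
  then have "coeff (Gp q ^ k * \<Omega>) j \<noteq> 0"
    using \<open>G \<noteq> 0\<close> \<open>coeff \<Omega> j \<noteq> 0\<close> by simp
  then have "degree (coeff (Gp q ^ k * \<Omega>) j) * q + j * (q + 1) \<le> k * q ^ 3 + m"
    using weight unfolding hweight_le_def by blast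
  moreover have "degree (coeff (Gp q ^ k * \<Omega>) j) = k * q\<^sup>2 + degree (coeff \<Omega> j)"
    using \<open>G \<noteq> 0\<close> \<open>coeff \<Omega> j \<noteq> 0\<close> \<open>degree G = q\<^sup>2\<close>
    by (simp add: coeff degree_mult_eq degree_power_eq)
  ultimately show "degree (coeff \<Omega> j) * q + j * (q + 1) \<le> m"
    by (simp add: algebra_simps power2_eq_square power3_eq_cube)
qed

section \<open>Evaluation and order of vanishing at a point\<close>

abbreviation X_minus :: "'a::comm_ring_1 \<Rightarrow> 'a poly poly" where
  "X_minus a \<equiv> Xp - [:[:a:]:]"

abbreviation Y_minus :: "'a::comm_ring_1 \<Rightarrow> 'a poly poly" where
  "Y_minus b \<equiv> Yp - [:[:b:]:]"

lemma heval_altdef: "heval F P = poly (poly F [:snd P:]) (fst P)"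
  by (induction F) (simp_all add: heval_def map_poly_pCons)

lemma heval_simps [simp]:
  "heval (F + G) P = heval F P + heval G P"
  "heval (F - G) P = heval F P - heval G P"
  "heval (F * G) P = heval F P * heval G P"
  "heval (- F) P = - heval F P"
  "heval (F ^ n) P = heval F P ^ n"
  "heval 0 P = 0"
  "heval 1 P = 1"
  "heval [:u:] P = poly u (fst P)"
  "heval Xp P = fst P"
  "heval Yp P = snd P"
  by (simp_all add: heval_altdef Xp_def Yp_def)

lemma heval_hermH: "P \<in> HermPts q \<Longrightarrow> heval (hermH q) P = 0"
  by (auto simp: hermH_def HermPts_def)

lemma hval_ge_0 [simp]: "hval_ge q P 0 F"
  unfolding hval_ge_def by (intro exI[of _ "\<lambda>_. F"] exI[of _ 0]) simp

lemma hval_ge_hermH_multiple: "hval_ge q P k (d * hermH q)"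
  unfolding hval_ge_def by (intro exI[of _ "\<lambda>_. 0"] exI[of _ d]) simp

lemma hval_ge_add:
  assumes "hval_ge q P k F" and "hval_ge q P k G"
  shows "hval_ge q P k (F + G)"
proof -
  obtain c d c' d'
    where F: "F = (\<Sum>i\<le>k. c i * X_minus (fst P) ^ i * Y_minus (snd P) ^ (k - i)) + d * hermH q"
      and G: "G = (\<Sum>i\<le>k. c' i * X_minus (fst P) ^ i * Y_minus (snd P) ^ (k - i)) + d' * hermH q"
    using assms unfolding hval_ge_def by blast
  show ?thesis
    unfolding hval_ge_def
    by (intro exI[of _ "\<lambda>i. c i + c' i"] exI[of _ "d + d'"])
       (simp add: F G sum.distrib ring_distribs add_ac)
qed

lemma hval_ge_mult_left:
  assumes "hval_ge q P k F"
  shows "hval_ge q P k (C * F)"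
proof -
  obtain c d
    where F: "F = (\<Sum>i\<le>k. c i * X_minus (fst P) ^ i * Y_minus (snd P) ^ (k - i)) + d * hermH q"
    using assms unfolding hval_ge_def by blast
  show ?thesis
    unfolding hval_ge_def
    by (intro exI[of _ "\<lambda>i. C * c i"] exI[of _ "C * d"])
       (simp add: F sum_distrib_left distrib_left mult.assoc)
qed

lemma hval_ge_diff: "hval_ge q P k F \<Longrightarrow> hval_ge q P k G \<Longrightarrow> hval_ge q P k (F - G)"
  using hval_ge_add[of q P k F "-1 * G"] hval_ge_mult_left[of q P k G "-1"] by simp

lemma hval_ge_X_minus_mult:
  assumes "hval_ge q P k F"
  shows "hval_ge q P (Suc k) (X_minus (fst P) * F)"
proof -
  obtain c d
    where F: "F = (\<Sum>i\<le>k. c i * X_minus (fst P) ^ i * Y_minus (snd P) ^ (k - i)) + d * hermH q"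
    using assms unfolding hval_ge_def by blast
  have shift: "x * (\<Sum>i\<le>k. c i * x ^ i * y ^ (k - i))
      = (\<Sum>i\<le>Suc k. (if i = 0 then 0 else c (i - 1)) * x ^ i * y ^ (Suc k - i))"
    for x y :: "'a poly poly"
    by (simp del: sum.atMost_Suc add: sum.atMost_Suc_shift sum_distrib_left mult_ac)
  show ?thesis
    unfolding hval_ge_def
    by (intro exI[of _ "\<lambda>i. if i = 0 then 0 else c (i - 1)"] exI[of _ "X_minus (fst P) * d"])
       (simp only: F distrib_left shift, simp only: mult.assoc)
qed

lemma hval_ge_Y_minus_mult:
  assumes "hval_ge q P k F"
  shows "hval_ge q P (Suc k) (Y_minus (snd P) * F)"
proof -
  obtain c d
    where F: "F = (\<Sum>i\<le>k. c i * X_minus (fst P) ^ i * Y_minus (snd P) ^ (k - i)) + d * hermH q"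
    using assms unfolding hval_ge_def by blast
  have shift: "y * (\<Sum>i\<le>k. c i * x ^ i * y ^ (k - i))
      = (\<Sum>i\<le>Suc k. (if i \<le> k then c i else 0) * x ^ i * y ^ (Suc k - i))"
    for x y :: "'a poly poly"
    by (simp add: sum_distrib_left mult_ac Suc_diff_le)
  show ?thesis
    unfolding hval_ge_def
    by (intro exI[of _ "\<lambda>i. if i \<le> k then c i else 0"] exI[of _ "Y_minus (snd P) * d"])
       (simp only: F distrib_left shift, simp only: mult.assoc)
qed

lemma hval_ge_Suc_iff:
  "hval_ge q P (Suc k) F \<longleftrightarrow>
     (\<exists>A B d. hval_ge q P k A \<and> hval_ge q P k B
        \<and> F = X_minus (fst P) * A + Y_minus (snd P) * B + d * hermH q)"
proof
  assume "hval_ge q P (Suc k) F"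
  then obtain c d
    where F: "F = (\<Sum>i\<le>Suc k. c i * X_minus (fst P) ^ i * Y_minus (snd P) ^ (Suc k - i)) + d * hermH q"
    unfolding hval_ge_def by blast
  define A where "A = (\<Sum>i\<le>k. c (Suc i) * X_minus (fst P) ^ i * Y_minus (snd P) ^ (k - i))"
  define B where "B = c 0 * Y_minus (snd P) ^ k"
  have "hval_ge q P k A"
    unfolding hval_ge_def A_def by (intro exI[of _ "\<lambda>i. c (Suc i)"] exI[of _ 0]) simp
  moreover have "hval_ge q P k B"
    unfolding hval_ge_def B_def
    by (intro exI[of _ "\<lambda>i. if i = 0 then c 0 else 0"] exI[of _ 0]) (simp add: if_distrib[of "\<lambda>u. u * _"] cong: if_cong)
  moreover have "F = X_minus (fst P) * A + Y_minus (snd P) * B + d * hermH q"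
    by (simp del: sum.atMost_Suc add: F A_def B_def sum.atMost_Suc_shift sum_distrib_left mult_ac)
  ultimately show "\<exists>A B d. hval_ge q P k A \<and> hval_ge q P k B
      \<and> F = X_minus (fst P) * A + Y_minus (snd P) * B + d * hermH q"
    by blast
qed (auto intro!: hval_ge_add hval_ge_X_minus_mult hval_ge_Y_minus_mult hval_ge_hermH_multiple)

lemma hval_ge_mult:
  assumes "hval_ge q P k F" and "hval_ge q P l G"
  shows "hval_ge q P (k + l) (F * G)"
  using assms(1)
proof (induction k arbitrary: F)
  case 0
  then show ?case
    using hval_ge_mult_left[OF assms(2), of F] by simp
next
  case (Suc k)
  then obtain A B d where "hval_ge q P k A" "hval_ge q P k B"
    and F: "F = X_minus (fst P) * A + Y_minus (snd P) * B + d * hermH q"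
    by (auto simp: hval_ge_Suc_iff)
  moreover have "F * G = X_minus (fst P) * (A * G) + Y_minus (snd P) * (B * G) + (d * G) * hermH q"
    by (simp add: F algebra_simps)
  ultimately show ?case
    unfolding add_Suc hval_ge_Suc_iff using Suc.IH by blast
qed

lemma hval_ge_Suc_imp: "hval_ge q P (Suc k) F \<Longrightarrow> hval_ge q P k F"
proof (induction k arbitrary: F)
  case (Suc k)
  then show ?case
    by (subst hval_ge_Suc_iff) (auto simp: hval_ge_Suc_iff[of q P "Suc k"])
qed simp

lemma hval_ge_mono: "j \<le> k \<Longrightarrow> hval_ge q P k F \<Longrightarrow> hval_ge q P j F"
  by (induction k rule: dec_induct) (auto dest: hval_ge_Suc_imp)

lemma hval_ge_power: "hval_ge q P k F \<Longrightarrow> hval_ge q P (n * k) (F ^ n)"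
  by (induction n) (simp_all add: hval_ge_mult)

lemma hval_ge_prod:
  "(\<And>i. i \<in> I \<Longrightarrow> hval_ge q P (k i) (F i)) \<Longrightarrow> hval_ge q P (\<Sum>i\<in>I. k i) (\<Prod>i\<in>I. F i)"
  by (induction I rule: infinite_finite_induct) (simp_all add: hval_ge_mult)

lemma hval_ge_X_minus_power: "hval_ge q (a, b) k (X_minus a ^ k)"
  using hval_ge_power[OF hval_ge_X_minus_mult[OF hval_ge_0, of q "(a, b)" 1], of k] by simp

lemma hval_ge_1_of_heval_eq_0:
  assumes "heval F P = 0"
  shows "hval_ge q P 1 F"
proof -
  obtain a b where P: "P = (a, b)"
    by (cases P)
  define F\<^sub>b where "F\<^sub>b = poly F [:b:]"
  have "[:-[:b:], 1:] * synthetic_div F [:b:] + [:F\<^sub>b:] = F"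
    unfolding F\<^sub>b_def by (rule synthetic_div_correct')
  moreover have "[:-a, 1:] * synthetic_div F\<^sub>b a = F\<^sub>b"
    using synthetic_div_correct'[of a F\<^sub>b] assms by (simp add: F\<^sub>b_def P heval_altdef)
  ultimately have "F = X_minus a * [:synthetic_div F\<^sub>b a:] + Y_minus b * synthetic_div F [:b:]"
    by (simp add: Xp_def Yp_def algebra_simps)
  then show ?thesis
    unfolding P
    using hval_ge_add[OF hval_ge_X_minus_mult[OF hval_ge_0] hval_ge_Y_minus_mult[OF hval_ge_0], of q "(a, b)"]
    by (metis fst_conv snd_conv One_nat_def)
qed

lemma heval_eq_0_of_hval_ge:
  assumes "P \<in> HermPts q" and "hval_ge q P (Suc k) F"
  shows "heval F P = 0"
  using assms by (auto simp: hval_ge_Suc_iff heval_hermH)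

lemma hval_ge_cancel_unit:
  fixes W :: "'a::field poly poly"
  assumes W: "heval W P \<noteq> 0" and WF: "hval_ge q P k (W * F)"
  shows "hval_ge q P k F"
proof -
  define c where "c = heval W P"
  have "hval_ge q P 1 (W - [:[:c:]:])"
    by (rule hval_ge_1_of_heval_eq_0) (simp add: c_def)
  have "hval_ge q P j F" if "j \<le> k" for j
    using that
  proof (induction j)
    case (Suc j)
    have "hval_ge q P (Suc j) (W * F - (W - [:[:c:]:]) * F)"
      using hval_ge_mono[OF Suc.prems WF] hval_ge_mult[OF \<open>hval_ge q P 1 _\<close> Suc.IH] Suc.prems
      by (auto intro: hval_ge_diff)
    moreover have "F = [:[:1 / c:]:] * (W * F - (W - [:[:c:]:]) * F)"
      using W by (simp add: c_def algebra_simps one_pCons[symmetric])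
    ultimately show ?case
      by (metis hval_ge_mult_left)
  qed simp
  then show ?thesis
    by simp
qed

section \<open>X - a is a local parameter\<close>

(* Since dH/dY = q Y^(q-1) + 1 = 1, B = (Y^q - b^q) / (Y - b) + 1 is a unit at P = (a, b):
   X - a is a local parameter at P. *)
lemma Hermitian_local_parameter:
  fixes a b :: "'a::field"
  assumes P: "(a, b) \<in> HermPts q" and q0: "of_nat q = (0::'a)"
  obtains A B where "Y_minus b * B = hermH q + X_minus a * A" and "heval B (a, b) = 1"
proof
  define B where "B = (\<Sum>i<q. [:[:b:]:] ^ (q - Suc i) * Yp ^ i) + (1 :: 'a poly poly)"
  define A where "A = (\<Sum>i<q + 1. [:[:a:]:] ^ (q + 1 - Suc i) * Xp ^ i :: 'a poly poly)"
  have curve: "[:[:b:]:] ^ q + [:[:b:]:] = [:[:a:]:] ^ (q + 1)"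
    using P by (simp add: HermPts_def poly_const_pow)
  have "Y_minus b * B = (Yp ^ q - [:[:b:]:] ^ q) + Y_minus b"
    by (simp add: B_def power_diff_sumr2 algebra_simps)
  also have "\<dots> = hermH q + (Xp ^ (q + 1) - ([:[:b:]:] ^ q + [:[:b:]:]))"
    by (simp add: hermH_def algebra_simps)
  also have "\<dots> = hermH q + X_minus a * A"
    by (simp only: curve A_def power_diff_sumr2)
  finally show "Y_minus b * B = hermH q + X_minus a * A" .
  have "(\<Sum>i<q. b ^ (q - Suc i) * b ^ i) = of_nat q * b ^ (q - 1)"
    by (simp add: power_add [symmetric])
  then show "heval B (a, b) = 1"
    using q0 by (simp add: B_def heval_altdef Yp_def poly_sum coeff_sum)
qed

lemma hval_ge_imp_unit_power_mult:
  assumes AB: "Y_minus b * B = hermH q + X_minus a * A" and "hval_ge q (a, b) k F"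
  shows "\<exists>C D. B ^ k * F = X_minus a ^ k * C + D * hermH q"
  using assms(2)
proof (induction k arbitrary: F)
  case 0
  then show ?case
    by (intro exI[of _ F] exI[of _ 0]) simp
next
  case (Suc k)
  then obtain F\<^sub>X F\<^sub>Y d where "hval_ge q (a, b) k F\<^sub>X" "hval_ge q (a, b) k F\<^sub>Y"
    and F: "F = X_minus a * F\<^sub>X + Y_minus b * F\<^sub>Y + d * hermH q"
    by (auto simp: hval_ge_Suc_iff)
  then obtain C\<^sub>X D\<^sub>X C\<^sub>Y D\<^sub>Y
    where X: "B ^ k * F\<^sub>X = X_minus a ^ k * C\<^sub>X + D\<^sub>X * hermH q"
      and Y: "B ^ k * F\<^sub>Y = X_minus a ^ k * C\<^sub>Y + D\<^sub>Y * hermH q"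
    using Suc.IH by meson
  have "B ^ Suc k * F
      = X_minus a * B * (B ^ k * F\<^sub>X) + (Y_minus b * B) * (B ^ k * F\<^sub>Y) + B ^ Suc k * d * hermH q"
    by (simp add: F algebra_simps)
  also have "\<dots> = X_minus a ^ Suc k * (B * C\<^sub>X + A * C\<^sub>Y)
      + (X_minus a * B * D\<^sub>X + X_minus a ^ k * C\<^sub>Y + (hermH q + X_minus a * A) * D\<^sub>Y + B ^ Suc k * d)
        * hermH q"
    unfolding X Y AB by (simp add: algebra_simps smult_add_right)
  finally show ?case
    by blast
qed

(* Multiplying by B^(k+1) turns every generator Y - b of M_P into X - a modulo H; the factor
   X - a can then be cancelled because H is monic in Y. *)
lemma hval_ge_cancel_X_minus:
  fixes W F :: "'a::field poly poly"
  assumes P: "(a, b) \<in> HermPts q" and q0: "of_nat q = (0::'a)" and q2: "q \<ge> 2"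
    and W: "heval W (a, b) \<noteq> 0" and XWF: "hval_ge q (a, b) (Suc k) (X_minus a * W * F)"
  shows "hval_ge q (a, b) k F"
proof -
  obtain A B where AB: "Y_minus b * B = hermH q + X_minus a * A" and B: "heval B (a, b) = 1"
    using Hermitian_local_parameter[OF P q0] .
  obtain C D where CD: "B ^ Suc k * (X_minus a * W * F) = X_minus a ^ Suc k * C + D * hermH q"
    using hval_ge_imp_unit_power_mult[OF AB XWF] by blast
  define Z where "Z = B ^ Suc k * W * F - X_minus a ^ k * C"
  have "X_minus a * Z = B ^ Suc k * (X_minus a * W * F) - X_minus a ^ Suc k * C"
    by (simp only: Z_def right_diff_distrib power_Suc ac_simps)
  also have "\<dots> = hermH q * D"
    unfolding CD by (simp add: mult.commute)
  finally have "hermH q dvd X_minus a * Z"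
    by (rule dvdI)
  then have "hermH q dvd smult [:-a, 1:] Z"
    by (simp add: Xp_def)
  then have "hermH q dvd Z"
    by (rule dvd_monic[OF lead_coeff_hermH[OF q2]]) simp
  then obtain E where "Z = hermH q * E"
    by (elim dvdE)
  then have "B ^ Suc k * W * F = X_minus a ^ k * C + E * hermH q"
    by (simp add: Z_def diff_eq_eq ac_simps)
  moreover have "hval_ge q (a, b) k (C * X_minus a ^ k + E * hermH q)"
    by (intro hval_ge_add hval_ge_hermH_multiple hval_ge_mult_left hval_ge_X_minus_power)
  ultimately have "hval_ge q (a, b) k ((B ^ Suc k * W) * F)"
    by (simp add: mult.commute)
  then show ?thesis
    by (rule hval_ge_cancel_unit[rotated]) (simp add: B W)
qed

lemma hval_ge_cancel_Gp:
  fixes F :: "'a::{field,finite} poly poly"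
  assumes P: "(a, b) \<in> HermPts q" and q0: "of_nat q = (0::'a)" and card: "card (UNIV :: 'a set) = q\<^sup>2"
    and GF: "hval_ge q (a, b) (Suc k) (Gp q * F)"
  shows "hval_ge q (a, b) k F"
proof -
  have "of_nat (q\<^sup>2) = (0::'a)"
    using q0 by simp
  moreover have "a ^ q\<^sup>2 = a"
    using field_power_card_eq_same[of a] card by simp
  ultimately obtain u where u: "[:0, 1:] ^ q\<^sup>2 - [:0, 1:] = [:-a, 1:] * u" and "poly u a = -1"
    by (rule X_power_minus_X_eq_linear_mult)
  have "Gp q = X_minus a * [:u:]"
    by (simp add: Gp_eq u Xp_def)
  then have "hval_ge q (a, b) (Suc k) (X_minus a * [:u:] * F)"
    using GF by simp
  then show ?thesis
    by (rule hval_ge_cancel_X_minus[OF P q0 card_UNIV_eq_square_imp_ge_2[OF card], rotated])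
      (simp add: \<open>poly u a = -1\<close>)
qed

section \<open>Division by powers of G\<close>

lemma coeff_vanishes_of_vanishes_on_HermPts:
  fixes r :: "'a::{field,finite} poly poly"
  assumes frob: "\<And>x y :: 'a. (x + y) ^ q = x ^ q + y ^ q"
    and card: "card (UNIV :: 'a set) = q\<^sup>2"
    and r: "degree r < q" "\<forall>P\<in>HermPts q. heval r P = 0"
  shows "poly (coeff r j) \<alpha> = 0"
proof -
  define r\<^sub>\<alpha> where "r\<^sub>\<alpha> = map_poly (\<lambda>c. poly c \<alpha>) r"
  have "r\<^sub>\<alpha> = 0"
  proof (rule ccontr)
    assume "r\<^sub>\<alpha> \<noteq> 0"
    have "{b. b ^ q + b = \<alpha> ^ (q + 1)} \<subseteq> {b. poly r\<^sub>\<alpha> b = 0}"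
      using r(2) by (auto simp: HermPts_def heval_def r\<^sub>\<alpha>_def)
    then have "q \<le> card {b. poly r\<^sub>\<alpha> b = 0}"
      using card_Hermitian_fiber_ge[OF frob card, of \<alpha>] poly_roots_finite[OF \<open>r\<^sub>\<alpha> \<noteq> 0\<close>]
      by (meson card_mono le_trans)
    also have "\<dots> \<le> degree r\<^sub>\<alpha>"
      using \<open>r\<^sub>\<alpha> \<noteq> 0\<close> by (rule card_poly_roots_bound)
    also have "\<dots> \<le> degree r"
      unfolding r\<^sub>\<alpha>_def by (rule degree_le) (simp add: coeff_map_poly coeff_eq_0)
    finally show False
      using r(1) by simp
  qed
  then show ?thesis
    using coeff_map_poly[of "\<lambda>c. poly c \<alpha>" r j] by (simp add: r\<^sub>\<alpha>_def)
qed

lemma Gp_dvd_of_vanishes_on_HermPts: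
  fixes r :: "'a::{field,finite} poly poly"
  assumes frob: "\<And>x y :: 'a. (x + y) ^ q = x ^ q + y ^ q"
    and card: "card (UNIV :: 'a set) = q\<^sup>2"
    and r: "degree r < q" "\<forall>P\<in>HermPts q. heval r P = 0"
  shows "Gp q dvd r"
  unfolding Gp_eq const_poly_dvd_iff
  using X_power_card_minus_X_dvd[OF coeff_vanishes_of_vanishes_on_HermPts[OF frob card r]] card
  by simp

lemma hcong_Gp_power_mult_of_hval_ge:
  fixes F :: "'a::{field,finite} poly poly"
  assumes frob: "\<And>x y :: 'a. (x + y) ^ q = x ^ q + y ^ q"
    and q0: "of_nat q = (0::'a)" and card: "card (UNIV :: 'a set) = q\<^sup>2"
    and "\<forall>P\<in>HermPts q. hval_ge q P k F"
  shows "\<exists>\<Omega>. hcong q F (Gp q ^ k * \<Omega>)"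
  using assms(4)
proof (induction k arbitrary: F)
  case 0
  show ?case
    by (intro exI[of _ F]) (simp add: hcong_def)
next
  case (Suc k)
  obtain r where r: "hreduced q r" "hcong q F r"
    using hermH_reduce[OF card_UNIV_eq_square_imp_ge_2[OF card]] by metis
  have hval_r: "hval_ge q P (Suc k) r" if "P \<in> HermPts q" for P
  proof -
    obtain t where "F - r = hermH q * t"
      using r(2) by (auto simp: hcong_def)
    then have "r = F - t * hermH q"
      by (simp add: algebra_simps)
    then show ?thesis
      using Suc.prems that by (simp add: hval_ge_diff hval_ge_hermH_multiple)
  qed
  then have "\<forall>P\<in>HermPts q. heval r P = 0"
    using heval_eq_0_of_hval_ge by blast
  then have "Gp q dvd r"
    using r(1) by (intro Gp_dvd_of_vanishes_on_HermPts[OF frob card]) (simp_all add: hreduced_def)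
  then obtain F' where F': "r = Gp q * F'"
    by (elim dvdE)
  have "hval_ge q P k F'" if P: "P \<in> HermPts q" for P
  proof -
    obtain a b where "P = (a, b)"
      by (cases P)
    then show ?thesis
      using hval_ge_cancel_Gp[OF _ q0 card] P hval_r[OF P] unfolding F' by blast
  qed
  then obtain \<Omega> where "hcong q F' (Gp q ^ k * \<Omega>)"
    using Suc.IH by blast
  then have "hcong q F (Gp q ^ Suc k * \<Omega>)"
    using hcong_trans[OF r(2)] hcong_mult_left[of q F' _ "Gp q"] by (simp add: F' mult.assoc)
  then show ?case
    by blast
qed

lemma Gp_power_quotient_exists:
  fixes F :: "'a::{field,finite} poly poly"
  assumes frob: "\<And>x y :: 'a. (x + y) ^ q = x ^ q + y ^ q"
    and q0: "of_nat q = (0::'a)" and card: "card (UNIV :: 'a set) = q\<^sup>2"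
    and val: "\<forall>P\<in>HermPts q. hval_ge q P k F" and weight: "hweight_le q F (k * q ^ 3 + m)"
  shows "\<exists>\<Omega>. hreduced q \<Omega> \<and> hweight_le q \<Omega> m \<and> hcong q F (Gp q ^ k * \<Omega>)"
proof -
  have q2: "q \<ge> 2"
    using card by (rule card_UNIV_eq_square_imp_ge_2)
  obtain \<Omega>\<^sub>0 where "hcong q F (Gp q ^ k * \<Omega>\<^sub>0)"
    using hcong_Gp_power_mult_of_hval_ge[OF frob q0 card val] by blast
  moreover obtain \<Omega> where \<Omega>: "hreduced q \<Omega>" "hcong q \<Omega>\<^sub>0 \<Omega>"
    using hermH_reduce[OF q2] by metis
  ultimately have F\<Omega>: "hcong q F (Gp q ^ k * \<Omega>)"
    using hcong_trans hcong_mult_left by blast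
  obtain r where r: "hreduced q r" "hcong q F r" "hweight_le q r (k * q ^ 3 + m)"
    using hermH_reduce[OF q2] weight by metis
  have "r = Gp q ^ k * \<Omega>"
    using hcong_trans[OF hcong_sym[OF r(2)] F\<Omega>]
    by (rule hreduced_hcong_eq[OF q2 r(1) hreduced_Gp_power_mult[OF \<Omega>(1)]])
  then have "hweight_le q \<Omega> m"
    using r(3) hweight_le_Gp_power_mult_cancel[OF q2] by simp
  then show ?thesis
    using \<Omega>(1) F\<Omega> by blast
qed

lemma Gp_power_quotient_unique:
  fixes \<Omega> \<Omega>' :: "'a::idom poly poly"
  assumes q2: "q \<ge> 2" and "hreduced q \<Omega>" "hreduced q \<Omega>'"
    and "hcong q F (Gp q ^ k * \<Omega>)" "hcong q F (Gp q ^ k * \<Omega>')"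
  shows "\<Omega> = \<Omega>'"
proof -
  have "Gp q ^ k * \<Omega> = Gp q ^ k * \<Omega>'"
    using assms(2,3) hcong_trans[OF hcong_sym[OF assms(4)] assms(5)]
    by (intro hreduced_hcong_eq[OF q2] hreduced_Gp_power_mult)
  moreover have "Gp q \<noteq> (0 :: 'a poly poly)"
    using degree_X_power_minus_X[OF square_ge_2[OF q2], where 'a='a] square_ge_2[OF q2]
    by (auto simp: Gp_eq)
  ultimately show ?thesis
    by simp
qed

lemma hgenus_ge_1:
  assumes "q \<ge> 2"
  shows "hgenus q \<ge> 1"
proof -
  have "2 * 1 \<le> q * (q - 1)"
    using assms by (intro mult_le_mono) simp_all
  then show ?thesis
    by (simp add: hgenus_def div_greater_zero_iff Suc_le_eq)
qed

lemma hval_ge_error_locator_mult: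
  assumes error: "(\<exists>\<mu><h. r \<mu> P \<noteq> heval (f \<mu>) P) \<Longrightarrow> hval_ge q P s \<Lambda>"
    and R: "\<forall>\<mu><h. heval (R \<mu>) P = r \<mu> P" and ii: "(\<Sum>\<mu><h. ii \<mu>) \<le> s"
  shows "hval_ge q P (\<Sum>\<mu><h. ii \<mu>) (\<Lambda> * (\<Prod>\<mu><h. (f \<mu> - R \<mu>) ^ ii \<mu>))"
proof (cases "\<exists>\<mu><h. r \<mu> P \<noteq> heval (f \<mu>) P")
  case True
  then have "hval_ge q P (\<Sum>\<mu><h. ii \<mu>) \<Lambda>"
    using error ii hval_ge_mono by blast
  then show ?thesis
    using hval_ge_mult[of q P _ \<Lambda> 0] by simp
next
  case False
  have "hval_ge q P (ii \<mu> * 1) ((f \<mu> - R \<mu>) ^ ii \<mu>)" if "\<mu> < h" for \<mu>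
    using False R that by (intro hval_ge_power hval_ge_1_of_heval_eq_0) auto
  then have "hval_ge q P (\<Sum>\<mu><h. ii \<mu>) (\<Prod>\<mu><h. (f \<mu> - R \<mu>) ^ ii \<mu>)"
    using hval_ge_prod[of "{..<h}" q P ii] by simp
  then show ?thesis
    by (rule hval_ge_mult_left)
qed

lemma hweight_le_error_locator_mult:
  assumes "\<And>\<mu>. \<mu> < h \<Longrightarrow> hweight_le q (f \<mu> - R \<mu>) (q ^ 3 + d)"
  shows "hweight_le q (\<Lambda> * (\<Prod>\<mu><h. (f \<mu> - R \<mu>) ^ ii \<mu>))
           ((\<Sum>\<mu><h. ii \<mu>) * q ^ 3 + (hdeg q \<Lambda> + (\<Sum>\<mu><h. ii \<mu>) * d))"
proof -
  have "hweight_le q (\<Lambda> * (\<Prod>\<mu><h. (f \<mu> - R \<mu>) ^ ii \<mu>)) (hdeg q \<Lambda> + (\<Sum>\<mu><h. ii \<mu> * (q ^ 3 + d)))"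
    using assms by (intro hweight_le_mult[OF hweight_le_of_hdeg_le] hweight_le_prod hweight_le_power) simp_all
  then show ?thesis
    by (simp only: flip: sum_distrib_right) (simp add: distrib_left add_ac)
qed

theorem lemma4:
  fixes q h mH s :: nat
    and f R :: "nat \<Rightarrow> 'a::{field,finite} poly poly"
    and r :: "nat \<Rightarrow> 'a \<times> 'a \<Rightarrow> 'a"
    and Lam :: "'a poly poly"
    and ii :: "nat \<Rightarrow> nat"
  assumes q_pp: "\<exists>p k. prime p \<and> k > 0 \<and> q = p ^ k"
    and card: "card (UNIV :: 'a set) = q ^ 2"
    and h: "h \<ge> 1"
    and mH: "2 * (int (hgenus q) - 1) < int mH" "mH < q ^ 3"
    and f: "\<forall>\<mu><h. hreduced q (f \<mu>) \<and> (f \<mu> = 0 \<or> hdeg q (f \<mu>) \<le> mH)"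
    and R: "\<forall>\<mu><h. hreduced q (R \<mu>) \<and> (R \<mu> = 0 \<or> hdeg q (R \<mu>) < q ^ 3 + 2 * hgenus q)
              \<and> (\<forall>P\<in>HermPts q. heval (R \<mu>) P = r \<mu> P)"
    and Lam_red: "hreduced q Lam"
    and Lam_monic: "hmonic q Lam"
    and Lam_val: "\<forall>P\<in>{P \<in> HermPts q. \<exists>\<mu><h. r \<mu> P \<noteq> heval (f \<mu>) P}. hval_ge q P s Lam"
    and Lam_min: "\<forall>\<Lambda>. hreduced q \<Lambda> \<and> \<Lambda> \<noteq> 0
                    \<and> (\<forall>P\<in>{P \<in> HermPts q. \<exists>\<mu><h. r \<mu> P \<noteq> heval (f \<mu>) P}. hval_ge q P s \<Lambda>)
                    \<longrightarrow> hdeg q Lam \<le> hdeg q \<Lambda>"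
    and s: "s > 0"
    and ii: "(\<Sum>\<mu><h. ii \<mu>) \<le> s"
  shows "\<exists>!\<Omega>. hreduced q \<Omega>
           \<and> (\<Omega> = 0 \<or> int (hdeg q \<Omega>) \<le> int (hdeg q Lam) + int (\<Sum>\<mu><h. ii \<mu>) * (2 * int (hgenus q) - 1))
           \<and> hcong q (Lam * (\<Prod>\<mu><h. (f \<mu> - R \<mu>) ^ ii \<mu>)) (Gp q ^ (\<Sum>\<mu><h. ii \<mu>) * \<Omega>)"
proof -
  \<comment> \<open>Only the vanishing of \<open>Lam\<close> at the error positions enters, not its minimality,
    monicity or reducedness; the degree bounds on \<open>f\<close> and \<open>R\<close> enter only through
    \<open>deg\<^sub>H (f\<^sub>\<mu> - R\<^sub>\<mu>) \<le> q\<^sup>3 + 2g - 1\<close>.\<close>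
  obtain p e where "prime p" "e > 0" "q = p ^ e"
    using q_pp by blast
  note frob = Hermitian_field_char(2)[OF this card] and q0 = Hermitian_field_char(1)[OF this card]
  have q2: "q \<ge> 2"
    using card by (rule card_UNIV_eq_square_imp_ge_2)
  define k g d where "k = (\<Sum>\<mu><h. ii \<mu>)" and "g = hgenus q" and "d = 2 * g - 1"
  define F where "F = Lam * (\<Prod>\<mu><h. (f \<mu> - R \<mu>) ^ ii \<mu>)"
  have val: "\<forall>P\<in>HermPts q. hval_ge q P k F"
    unfolding k_def F_def using Lam_val R by (blast intro: hval_ge_error_locator_mult[where r=r, OF _ _ ii])
  have "hweight_le q (f \<mu> - R \<mu>) (q ^ 3 + d)" if "\<mu> < h" for \<mu>
    using f R mH(2) that by (intro hweight_le_diff hweight_le_of_hdeg_le) (auto simp: g_def d_def)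
  then have weight: "hweight_le q F (k * q ^ 3 + (hdeg q Lam + k * d))"
    unfolding k_def F_def by (rule hweight_le_error_locator_mult)
  obtain \<Omega> where \<Omega>: "hreduced q \<Omega>" "hweight_le q \<Omega> (hdeg q Lam + k * d)" "hcong q F (Gp q ^ k * \<Omega>)"
    using Gp_power_quotient_exists[OF frob q0 card val weight] by blast
  have "int d = 2 * int g - 1"
    using hgenus_ge_1[OF q2] by (simp add: d_def g_def of_nat_diff)
  then have "\<Omega> = 0 \<or> int (hdeg q \<Omega>) \<le> int (hdeg q Lam) + int k * (2 * int g - 1)"
    using \<Omega>(2) hdeg_le_iff_hweight_le by (metis of_nat_add of_nat_le_iff of_nat_mult)
  with \<Omega> show ?thesis
    unfolding F_def k_def g_def
    by (intro ex1I[of _ \<Omega>]) (auto intro: Gp_power_quotient_unique[OF q2])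
qed

end
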